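(* In the single-item all-pay auction with budgets described in the context, let $L=\min\{B_1,B_2,v_1,v_2\}$. Then in any Nash equilibrium $(F_1,F_2)$ we have $\overline{x}_1=\overline{x}_2=L$.
   Context: Single-item all-pay auction with budgets. There are two players $i\in\{1,2\}$; $-i$ denotes the opponent of $i$. Player $i$ has budget $B_i\ge 0$ and valuation $v_i>0$ for a single item. A pure strategy of player $i$ is a bid $x_i\in[0,B_i]$; a mixed strategy is a probability distribution on $[0,B_i]$, described by its cumulative distribution function $F_i$. The player with the higher bid wins the item. Tie-breaking: if $x_1=x_2=\min\{B_1,B_2,v_1,v_2\}$ and $\min\{B_i,v_i\}>\min\{B_{-i},v_{-i}\}$ for some $i$, then player $i$ wins; in all other ties each player wins with probability $\frac12$. Player $i$'s utility is $v_i-x_i$ if he wins and $-x_i$ if he loses. A Nash equilibrium is a pair $(F_1,F_2)$ such that each $F_i$ maximizes player $i$'s expected utility against $F_{-i}$ over all mixed strategies on $[0,B_i]$. $Supp(F_i)$ is the support of $F_i$, $\overline{x}_i=\sup Supp(F_i)$ and $\underline{x}_i=\inf Supp(F_i)$. *)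

theory Defs
  imports "HOL-Probability.Probability"
begin

text \<open>Mixed strategies are Borel probability measures on the reals concentrated
on the interval [0, B] (equivalently, distributions described by a CDF).\<close>

definition mixed_strategy :: "real \<Rightarrow> real measure \<Rightarrow> bool" where
  "mixed_strategy B M \<longleftrightarrow> prob_space M \<and> sets M = sets borel \<and> measure M {0..B} = 1"

text \<open>Support of a Borel measure on the reals: the smallest closed set of full measure,
i.e. the set of points every open neighbourhood of which has positive mass.\<close>

definition Supp :: "real measure \<Rightarrow> real set" where
  "Supp M = {x. \<forall>e>0. measure M (ball x e) > 0}"

definition L_val :: "real \<Rightarrow> real \<Rightarrow> real \<Rightarrow> real \<Rightarrow> real" where
  "L_val B1 B2 v1 v2 = min (min B1 B2) (min v1 v2)"

definition win_prob :: "real \<Rightarrow> real \<Rightarrow> real \<Rightarrow> real \<Rightarrow> real \<Rightarrow> real \<Rightarrow> real" where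
  "win_prob Bi vi Bo vo xi xo =
     (if xi > xo then 1
      else if xi < xo then 0
      else if xi = L_val Bi Bo vi vo \<and> min Bi vi > min Bo vo then 1
      else if xi = L_val Bi Bo vi vo \<and> min Bo vo > min Bi vi then 0
      else 1/2)"

definition utility :: "real \<Rightarrow> real \<Rightarrow> real \<Rightarrow> real \<Rightarrow> real \<Rightarrow> real \<Rightarrow> real" where
  "utility Bi vi Bo vo xi xo = vi * win_prob Bi vi Bo vo xi xo - xi"

definition exp_utility :: "real \<Rightarrow> real \<Rightarrow> real \<Rightarrow> real \<Rightarrow> real measure \<Rightarrow> real measure \<Rightarrow> real" where
  "exp_utility Bi vi Bo vo Mi Mo =
     (\<integral>xi. (\<integral>xo. utility Bi vi Bo vo xi xo \<partial>Mo) \<partial>Mi)"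

definition nash_eq :: "real \<Rightarrow> real \<Rightarrow> real \<Rightarrow> real \<Rightarrow> real measure \<Rightarrow> real measure \<Rightarrow> bool" where
  "nash_eq B1 v1 B2 v2 F1 F2 \<longleftrightarrow>
     mixed_strategy B1 F1 \<and> mixed_strategy B2 F2 \<and>
     (\<forall>G. mixed_strategy B1 G \<longrightarrow> exp_utility B1 v1 B2 v2 G F2 \<le> exp_utility B1 v1 B2 v2 F1 F2) \<and>
     (\<forall>G. mixed_strategy B2 G \<longrightarrow> exp_utility B2 v2 B1 v1 G F1 \<le> exp_utility B2 v2 B1 v1 F2 F1)"

end

theory Submission
  imports Defs
begin

text \<open>A bid that is used in equilibrium earns the equilibrium payoff, and no feasible pure bid
earns more. If one player's highest bid exceeded the other's, bids just above the opponent's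
highest bid would win surely at a lower price; hence both supports have the same supremum s,
and s \<le> L because nobody bids above his budget or value. If s < L, each player i secures
v_i - s by bidding slightly above s, so already near the bottom of his support he wins with
probability at least (v_i - s) / v_i: the opponent has an atom at or below player i's lowest
bid. Hence both lowest bids coincide at a common atom a < L, where ties are split evenly, and
raising the bid slightly above a gains a fixed fraction of a win at an arbitrarily small cost.\<close>

lemma AE_ex_in_positive_measure:
  assumes "A \<in> sets M" "measure M A > 0" "AE x in M. P x"
  shows "\<exists>x\<in>A. P x"
proof (rule ccontr)
  assume no_witness: "\<not> (\<exists>x\<in>A. P x)"
  have "AE x in M. x \<notin> A"
    using assms(3) by eventually_elim (use no_witness in blast)
  moreover have "{x \<in> space M. \<not> x \<notin> A} = A"
    using sets.sets_into_space[OF assms(1)] by auto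
  ultimately have "emeasure M A = 0"
    using AE_iff_measurable[OF assms(1)] by simp
  with assms(2) show False
    by (simp add: measure_def)
qed

lemma AE_in_Supp:
  assumes "finite_measure M" "sets M = sets borel"
  shows "AE x in M. x \<in> Supp M"
proof -
  interpret finite_measure M by fact
  define N where "N = {ball x e | x e. e > 0 \<and> measure M (ball x e) = 0}"
  obtain N' where N': "N' \<subseteq> N" "countable N'" "\<Union>N' = \<Union>N"
    using Lindelof[of N] unfolding N_def by auto
  have "(\<Union>B\<in>N'. B) \<in> null_sets M"
    using N'(1) assms(2)
    by (intro null_sets_UN'[OF \<open>countable N'\<close>])
      (auto simp: N_def null_sets_def emeasure_eq_measure)
  then have "\<Union>N' \<in> null_sets M"
    by simp
  moreover have "{x \<in> space M. x \<notin> Supp M} \<subseteq> \<Union>N'"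
  proof
    fix x assume "x \<in> {x \<in> space M. x \<notin> Supp M}"
    then obtain e where "e > 0" "\<not> measure M (ball x e) > 0"
      unfolding Supp_def by auto
    then have "measure M (ball x e) = 0"
      using measure_nonneg[of M "ball x e"] by linarith
    with \<open>e > 0\<close> have "ball x e \<in> N"
      unfolding N_def by blast
    with \<open>e > 0\<close> show "x \<in> \<Union>N'"
      unfolding N'(3) by (metis UnionI centre_in_ball)
  qed
  ultimately show ?thesis
    by (rule AE_I')
qed

lemma Supp_subset_closed:
  assumes "sets M = sets borel" "closed C" "AE x in M. x \<in> C"
  shows "Supp M \<subseteq> C"
proof
  fix x assume x: "x \<in> Supp M"
  show "x \<in> C"
  proof (rule ccontr)
    assume "x \<notin> C"
    then obtain e where "e > 0" "ball x e \<subseteq> - C"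
      using assms(2) open_contains_ball[of "- C"] by (auto simp: open_Compl)
    moreover have "measure M (ball x e) > 0"
      using x \<open>e > 0\<close> unfolding Supp_def by blast
    ultimately show False
      using AE_ex_in_positive_measure[of "ball x e" M] assms(1,3) by auto
  qed
qed

lemma Supp_nonempty:
  assumes "prob_space M" "sets M = sets borel"
  shows "Supp M \<noteq> {}"
proof -
  interpret prob_space M by fact
  have "measure M (space M) > 0"
    by (simp add: prob_space)
  then show ?thesis
    using AE_ex_in_positive_measure[OF sets.top _ AE_in_Supp[OF finite_measure_axioms assms(2)]]
    by auto
qed

lemma ex_gt_of_less_Sup_Supp:
  assumes "prob_space M" "sets M = sets borel" "m < Sup (Supp M)" "AE x in M. P x"
  shows "\<exists>x>m. P x"
proof -
  obtain y where "y \<in> Supp M" "m < y"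
    using less_cSupD[OF Supp_nonempty[OF assms(1,2)] assms(3)] by blast
  then have "measure M (ball y (y - m)) > 0"
    unfolding Supp_def by auto
  then obtain x where "x \<in> ball y (y - m)" "P x"
    using AE_ex_in_positive_measure[of "ball y (y - m)" M P] assms(2,4) by auto
  then have "m < x"
    by (simp add: dist_real_def abs_less_iff)
  with \<open>P x\<close> show ?thesis
    by blast
qed

lemma ex_near_Inf_Supp:
  assumes "prob_space M" "sets M = sets borel" "bdd_below (Supp M)" "d > 0" "AE x in M. P x"
  shows "\<exists>x. Inf (Supp M) \<le> x \<and> x < Inf (Supp M) + d \<and> P x"
proof -
  interpret prob_space M by fact
  obtain y where y: "y \<in> Supp M" "y < Inf (Supp M) + d / 2"
    using cInf_lessD[OF Supp_nonempty[OF assms(1,2)], of "Inf (Supp M) + d / 2"] assms(4) by auto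
  then have "measure M (ball y (d / 2)) > 0"
    unfolding Supp_def using assms(4) by auto
  moreover have "AE x in M. P x \<and> Inf (Supp M) \<le> x"
    using assms(5) AE_in_Supp[OF finite_measure_axioms assms(2)]
    by eventually_elim (use assms(3) in \<open>auto intro: cInf_lower\<close>)
  ultimately obtain x where x: "x \<in> ball y (d / 2)" "P x" "Inf (Supp M) \<le> x"
    using AE_ex_in_positive_measure[of "ball y (d / 2)" M "\<lambda>x. P x \<and> Inf (Supp M) \<le> x"] assms(2)
    by auto
  have "x < Inf (Supp M) + d"
    using x(1) y(2) abs_ge_minus_self[of "y - x"] by (simp add: dist_real_def)
  with x(2,3) show ?thesis
    by blast
qed

lemma mixed_strategyD:
  assumes "mixed_strategy B M"
  shows "prob_space M" "sets M = sets borel" "space M = UNIV" "AE x in M. x \<in> {0..B}"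
proof -
  show "prob_space M" and sets: "sets M = sets borel"
    using assms unfolding mixed_strategy_def by auto
  then interpret prob_space M by simp
  show "space M = UNIV"
    using sets_eq_imp_space_eq[OF sets] by simp
  show "AE x in M. x \<in> {0..B}"
    using assms sets unfolding mixed_strategy_def by (intro AE_prob_1) auto
qed

lemma mixed_strategy_Supp:
  assumes "mixed_strategy B M"
  shows "Supp M \<subseteq> {0..B}" "Supp M \<noteq> {}" "bdd_above (Supp M)" "bdd_below (Supp M)"
proof -
  note M = mixed_strategyD[OF assms]
  show sub: "Supp M \<subseteq> {0..B}"
    using Supp_subset_closed[OF M(2) _ M(4)] by simp
  show "Supp M \<noteq> {}"
    using Supp_nonempty[OF M(1,2)] .
  show "bdd_above (Supp M)" "bdd_below (Supp M)"
    using bdd_above_mono[OF _ sub] bdd_below_mono[OF _ sub] by auto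
qed

lemma mixed_strategy_Inf_Sup_Supp:
  assumes "mixed_strategy B M"
  shows "0 \<le> Inf (Supp M)" "Inf (Supp M) \<le> Sup (Supp M)" "Sup (Supp M) \<le> B"
    "AE x in M. Inf (Supp M) \<le> x \<and> x \<le> Sup (Supp M)"
proof -
  note S = mixed_strategy_Supp[OF assms]
  show "0 \<le> Inf (Supp M)"
    using S(1) by (intro cInf_greatest[OF S(2)]) auto
  show "Sup (Supp M) \<le> B"
    using S(1) by (intro cSup_least[OF S(2)]) auto
  show "Inf (Supp M) \<le> Sup (Supp M)"
    using S(2-4) by (rule cInf_le_cSup)
  note M = mixed_strategyD[OF assms]
  show "AE x in M. Inf (Supp M) \<le> x \<and> x \<le> Sup (Supp M)"
    using AE_in_Supp[OF prob_space.finite_measure[OF M(1)] M(2)]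
    by eventually_elim (use S(3,4) in \<open>auto intro: cInf_lower cSup_upper\<close>)
qed

lemma L_val_le: "L_val B1 B2 v1 v2 \<le> B1" "L_val B1 B2 v1 v2 \<le> v1"
  unfolding L_val_def by auto

lemma L_val_commute: "L_val B2 B1 v2 v1 = L_val B1 B2 v1 v2"
  unfolding L_val_def by (simp add: min.commute min.left_commute)

lemma win_prob_borel_measurable:
  "(\<lambda>(x, y). win_prob Bi vi Bo vo x y) \<in> borel_measurable (borel \<Otimes>\<^sub>M borel)"
  unfolding win_prob_def by measurable

lemma win_prob_bounds: "0 \<le> win_prob Bi vi Bo vo x y" "win_prob Bi vi Bo vo x y \<le> 1"
  unfolding win_prob_def by auto

locale best_response =
  fixes Bi vi Bo vo :: real and Fi Fo :: "real measure"
  assumes budget_nonneg: "0 \<le> Bi" and value_pos: "0 < vi"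
    and own_strategy: "mixed_strategy Bi Fi" and opp_strategy: "mixed_strategy Bo Fo"
    and best: "\<And>G. mixed_strategy Bi G \<Longrightarrow>
      exp_utility Bi vi Bo vo G Fo \<le> exp_utility Bi vi Bo vo Fi Fo"
begin

definition win :: "real \<Rightarrow> real" where
  "win x = (\<integral>y. win_prob Bi vi Bo vo x y \<partial>Fo)"

definition payoff :: "real \<Rightarrow> real" where
  "payoff x = (\<integral>y. utility Bi vi Bo vo x y \<partial>Fo)"

definition eq_payoff :: real where
  "eq_payoff = exp_utility Bi vi Bo vo Fi Fo"

abbreviation L :: real where
  "L \<equiv> L_val Bi Bo vi vo"

lemmas own = mixed_strategyD[OF own_strategy]
lemmas opp = mixed_strategyD[OF opp_strategy]

sublocale own: prob_space Fi
  by (rule own(1))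

sublocale opp: prob_space Fo
  by (rule opp(1))

lemma win_prob_measurable: "(\<lambda>y. win_prob Bi vi Bo vo x y) \<in> borel_measurable Fo"
proof -
  have "(\<lambda>y. win_prob Bi vi Bo vo x y) \<in> borel_measurable borel"
    unfolding win_prob_def by measurable
  then show ?thesis
    unfolding measurable_cong_sets[OF opp(2) refl] .
qed

lemma integrable_win_prob: "integrable Fo (\<lambda>y. win_prob Bi vi Bo vo x y)"
  using win_prob_bounds[of Bi vi Bo vo x]
  by (intro opp.integrable_const_bound[where B = 1] AE_I2 win_prob_measurable) auto

lemma win_bounds: "0 \<le> win x" "win x \<le> 1"
proof -
  show "0 \<le> win x"
    unfolding win_def by (rule Bochner_Integration.integral_nonneg) (simp add: win_prob_bounds)
  have "win x \<le> (\<integral>y. 1 \<partial>Fo)"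
    unfolding win_def by (rule integral_mono[OF integrable_win_prob]) (auto simp: win_prob_bounds)
  then show "win x \<le> 1"
    by (simp add: opp.prob_space)
qed

lemma payoff_eq: "payoff x = vi * win x - x"
proof -
  have "payoff x = (\<integral>y. vi * win_prob Bi vi Bo vo x y - x \<partial>Fo)"
    unfolding payoff_def utility_def ..
  also have "\<dots> = (\<integral>y. vi * win_prob Bi vi Bo vo x y \<partial>Fo) - (\<integral>y. x \<partial>Fo)"
    by (rule Bochner_Integration.integral_diff) (auto intro: integrable_win_prob)
  also have "\<dots> = vi * win x - x"
    unfolding win_def by (simp add: opp.prob_space)
  finally show ?thesis .
qed

lemma payoff_borel_measurable: "payoff \<in> borel_measurable borel"
proof -
  have "(\<lambda>(x, y). win_prob Bi vi Bo vo x y) \<in> borel_measurable (borel \<Otimes>\<^sub>M Fo)"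
    using win_prob_borel_measurable[of Bi vi Bo vo]
    unfolding measurable_cong_sets[OF sets_pair_measure_cong[OF refl opp(2)] refl] .
  from opp.borel_measurable_lebesgue_integral[OF this]
  have "win \<in> borel_measurable borel"
    unfolding win_def by simp
  then show ?thesis
    unfolding payoff_eq[abs_def] by measurable
qed

lemma payoff_le_eq_payoff:
  assumes "0 \<le> x" "x \<le> Bi"
  shows "payoff x \<le> eq_payoff"
proof -
  have "mixed_strategy Bi (return borel x)"
    unfolding mixed_strategy_def using assms by (auto simp: prob_space_return measure_return)
  moreover have "exp_utility Bi vi Bo vo (return borel x) Fo = payoff x"
    unfolding exp_utility_def payoff_def[symmetric]
    by (rule integral_return) (auto simp: payoff_borel_measurable)
  ultimately show ?thesis
    using best unfolding eq_payoff_def by fastforce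
qed

text \<open>No bid earns more than the equilibrium payoff, which is the mean payoff of the bids in Fi;
hence almost all of them earn exactly that.\<close>

lemma AE_payoff_eq: "AE x in Fi. payoff x = eq_payoff"
proof -
  have bounded: "AE x in Fi. norm (payoff x) \<le> vi + Bi"
    using own(4)
  proof (rule AE_mp, intro AE_I2 impI)
    fix x assume "x \<in> {0..Bi}"
    moreover have "0 \<le> vi * win x" "vi * win x \<le> vi"
      using win_bounds[of x] value_pos by (auto simp: mult_left_le)
    ultimately show "norm (payoff x) \<le> vi + Bi"
      unfolding payoff_eq by auto
  qed
  have "payoff \<in> borel_measurable Fi"
    using payoff_borel_measurable unfolding measurable_cong_sets[OF own(2) refl] .
  then have int: "integrable Fi payoff"
    by (rule own.integrable_const_bound[OF bounded])
  have nonneg: "AE x in Fi. 0 \<le> eq_payoff - payoff x"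
    using own(4) by eventually_elim (auto intro: payoff_le_eq_payoff)
  have "(\<integral>x. eq_payoff - payoff x \<partial>Fi) = eq_payoff - (\<integral>x. payoff x \<partial>Fi)"
    using int by (simp add: own.prob_space)
  also have "\<dots> = 0"
    unfolding eq_payoff_def exp_utility_def payoff_def by simp
  finally have "AE x in Fi. eq_payoff - payoff x = 0"
    using integral_nonneg_eq_0_iff_AE[OF _ nonneg] int by simp
  then show ?thesis
    by eventually_elim simp
qed

lemma win_eq_1:
  assumes "AE y in Fo. y < x"
  shows "win x = 1"
proof -
  have "win x = (\<integral>y. 1 \<partial>Fo)"
    unfolding win_def using assms
    by (intro integral_cong_AE win_prob_measurable) (auto simp: win_prob_def elim!: AE_mp)
  then show ?thesis
    by (simp add: opp.prob_space)
qed

lemma integrable_opp_indicator: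
  "A \<in> sets borel \<Longrightarrow> integrable Fo (indicator A :: real \<Rightarrow> real)"
  using opp(2)
  by (intro integrable_real_indicator) (auto simp: opp.emeasure_finite less_top[symmetric])

lemma win_le_measure_atMost: "win x \<le> measure Fo {..x}"
proof -
  have "win x \<le> (\<integral>y. indicator {..x} y \<partial>Fo)"
    unfolding win_def
    by (rule integral_mono[OF integrable_win_prob integrable_opp_indicator])
      (auto simp: win_prob_def indicator_def)
  then show ?thesis
    using opp(3) by simp
qed

lemma measure_lessThan_le_win: "measure Fo {..<x} \<le> win x"
proof -
  have "(\<integral>y. indicator {..<x} y \<partial>Fo) \<le> win x"
    unfolding win_def
    by (rule integral_mono[OF integrable_opp_indicator integrable_win_prob])
      (auto simp: win_prob_def indicator_def)
  then show ?thesis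
    using opp(3) by simp
qed

lemma win_tie_le:
  assumes "x \<noteq> L" "AE y in Fo. x \<le> y"
  shows "win x \<le> measure Fo {x} / 2"
proof -
  have "integrable Fo (\<lambda>y. indicator {x} y / 2 :: real)"
    using integrable_opp_indicator[of "{x}"] by simp
  then have "win x \<le> (\<integral>y. indicator {x} y / 2 \<partial>Fo)"
    unfolding win_def using assms(2)
    by (intro integral_mono_AE integrable_win_prob)
      (auto simp: win_prob_def indicator_def assms(1) elim!: AE_mp)
  then show ?thesis
    using opp(3) by simp
qed

lemma eq_payoff_nonneg: "0 \<le> eq_payoff"
proof -
  have "0 \<le> vi * win 0"
    using value_pos win_bounds(1) by simp
  then show ?thesis
    using payoff_le_eq_payoff[of 0] budget_nonneg unfolding payoff_eq by simp
qed

text \<open>Bids strictly between the two suprema would win surely, and a cheaper sure win is better.\<close>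

lemma Sup_Supp_le_opp: "Sup (Supp Fi) \<le> Sup (Supp Fo)"
proof (rule ccontr)
  let ?si = "Sup (Supp Fi)" and ?so = "Sup (Supp Fo)"
  assume "\<not> ?si \<le> ?so"
  define m where "m = (?si + ?so) / 2"
  have "0 \<le> ?so" "?si \<le> Bi"
    using mixed_strategy_Inf_Sup_Supp[OF own_strategy] mixed_strategy_Inf_Sup_Supp[OF opp_strategy]
    by auto
  with \<open>\<not> ?si \<le> ?so\<close> have m: "?so < m" "m < ?si" "0 \<le> m" "m \<le> Bi"
    unfolding m_def by auto
  have sure_win: "payoff x = vi - x" if "?so < x" for x
  proof -
    have "AE y in Fo. y < x"
      using mixed_strategy_Inf_Sup_Supp(4)[OF opp_strategy] by eventually_elim (use that in auto)
    then show ?thesis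
      unfolding payoff_eq by (simp add: win_eq_1)
  qed
  obtain x where "m < x" "payoff x = eq_payoff"
    using ex_gt_of_less_Sup_Supp[OF own(1,2) m(2) AE_payoff_eq] by blast
  with m sure_win[of x] sure_win[of m] payoff_le_eq_payoff[of m] show False
    by simp
qed

lemma Sup_Supp_le_value: "Sup (Supp Fi) \<le> vi"
proof (rule ccontr)
  assume "\<not> Sup (Supp Fi) \<le> vi"
  then obtain x where "vi < x" "payoff x = eq_payoff"
    using ex_gt_of_less_Sup_Supp[OF own(1,2) _ AE_payoff_eq, of vi] by auto
  moreover have "vi * win x \<le> vi"
    using win_bounds[of x] value_pos by (simp add: mult_left_le)
  ultimately show False
    using eq_payoff_nonneg unfolding payoff_eq by simp
qed

lemma Sup_Supp_le_min: "Sup (Supp Fi) \<le> min Bi vi"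
  using mixed_strategy_Inf_Sup_Supp(3)[OF own_strategy] Sup_Supp_le_value by simp

lemma eq_payoff_ge:
  assumes "Sup (Supp Fo) < L"
  shows "vi - Sup (Supp Fo) \<le> eq_payoff"
proof (rule field_le_epsilon)
  let ?s = "Sup (Supp Fo)"
  fix e :: real assume "0 < e"
  define x where "x = ?s + min e (L - ?s)"
  have "0 \<le> ?s"
    using mixed_strategy_Inf_Sup_Supp(1,2)[OF opp_strategy] by linarith
  with assms \<open>0 < e\<close> L_val_le[of Bi Bo vi vo]
  have x: "?s < x" "0 \<le> x" "x \<le> Bi" "x \<le> ?s + e"
    unfolding x_def by auto
  have "AE y in Fo. y < x"
    using mixed_strategy_Inf_Sup_Supp(4)[OF opp_strategy] by eventually_elim (use x in auto)
  then have "payoff x = vi - x"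
    unfolding payoff_eq by (simp add: win_eq_1)
  with payoff_le_eq_payoff[OF x(2,3)] x(4) show "vi - ?s \<le> eq_payoff + e"
    by simp
qed

text \<open>Bids near the bottom of the support still earn at least vi - Sup (Supp Fo) by the previous
lemma; right-continuity of the distribution function of Fo carries the resulting lower bound on
the winning probability down to the infimum.\<close>

lemma measure_atMost_Inf_Supp_ge:
  assumes "Sup (Supp Fo) < L"
  shows "(vi - Sup (Supp Fo)) / vi \<le> measure Fo {..Inf (Supp Fi)}"
proof -
  let ?a = "Inf (Supp Fi)" and ?c = "(vi - Sup (Supp Fo)) / vi"
  interpret finite_borel_measure Fo
    by (intro finite_borel_measure.intro finite_borel_measure_axioms.intro
        opp.finite_measure_axioms opp(2))
  have bound: "?c \<le> cdf Fo y" if "?a < y" for y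
  proof -
    have "\<exists>x. ?a \<le> x \<and> x < ?a + (y - ?a) \<and> payoff x = eq_payoff"
      using that by (intro ex_near_Inf_Supp[OF own(1,2) mixed_strategy_Supp(4)[OF own_strategy] _
            AE_payoff_eq]) simp
    then obtain x where x: "?a \<le> x" "x < y" "payoff x = eq_payoff"
      by auto
    have "vi - Sup (Supp Fo) \<le> vi * win x"
      using x(1,3) eq_payoff_ge[OF assms] mixed_strategy_Inf_Sup_Supp(1)[OF own_strategy]
      unfolding payoff_eq by linarith
    also have "\<dots> \<le> vi * measure Fo {..y}"
    proof (rule mult_left_mono)
      have "measure Fo {..x} \<le> measure Fo {..y}"
        using x(2) opp(2) by (intro opp.finite_measure_mono) auto
      then show "win x \<le> measure Fo {..y}"
        using win_le_measure_atMost[of x] by linarith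
    qed (use value_pos in simp)
    finally show ?thesis
      using value_pos unfolding cdf_def by (simp add: pos_divide_le_eq mult.commute)
  qed
  have "(cdf Fo \<longlongrightarrow> cdf Fo ?a) (at_right ?a)"
    using cdf_is_right_cont[of ?a] by (simp add: continuous_within)
  moreover have "\<forall>\<^sub>F y in at_right ?a. ?c \<le> cdf Fo y"
    using eventually_at_right_less[of ?a] by eventually_elim (rule bound)
  ultimately have "?c \<le> cdf Fo ?a"
    by (rule tendsto_lowerbound) simp
  then show ?thesis
    unfolding cdf_def .
qed

lemma opp_atom_below_Inf_Supp:
  assumes "Sup (Supp Fo) < L"
  shows "0 < measure Fo {..Inf (Supp Fi)}" "Inf (Supp Fo) \<le> Inf (Supp Fi)"
proof -
  have "Sup (Supp Fo) < vi"
    using assms L_val_le(2)[of Bi Bo vi vo] by linarith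
  then have "0 < (vi - Sup (Supp Fo)) / vi"
    using value_pos by simp
  then show pos: "0 < measure Fo {..Inf (Supp Fi)}"
    using measure_atMost_Inf_Supp_ge[OF assms] by linarith
  have "AE y in Fo. Inf (Supp Fo) \<le> y"
    using mixed_strategy_Inf_Sup_Supp(4)[OF opp_strategy] by eventually_elim simp
  then obtain y where "y \<le> Inf (Supp Fi)" "Inf (Supp Fo) \<le> y"
    using AE_ex_in_positive_measure[of "{..Inf (Supp Fi)}" Fo] pos opp(2) by auto
  then show "Inf (Supp Fo) \<le> Inf (Supp Fi)"
    by simp
qed

lemma payoff_Inf_Supp:
  assumes "0 < measure Fi {..Inf (Supp Fi)}"
  shows "payoff (Inf (Supp Fi)) = eq_payoff"
proof -
  let ?a = "Inf (Supp Fi)"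
  have "AE x in Fi. payoff x = eq_payoff \<and> ?a \<le> x"
    using AE_payoff_eq mixed_strategy_Inf_Sup_Supp(4)[OF own_strategy] by eventually_elim auto
  moreover have "{..?a} \<in> sets Fi"
    using own(2) by simp
  ultimately have "\<exists>x\<in>{..?a}. payoff x = eq_payoff \<and> ?a \<le> x"
    using AE_ex_in_positive_measure assms by blast
  then show ?thesis
    by force
qed

text \<open>At a common lowest atom below L ties are split, so a slightly higher bid gains half the atom.\<close>

lemma no_common_lowest_atom:
  assumes "Inf (Supp Fo) = Inf (Supp Fi)" "Inf (Supp Fi) < L"
    and "0 < measure Fi {..Inf (Supp Fi)}" "0 < measure Fo {..Inf (Supp Fi)}"
  shows False
proof -
  let ?a = "Inf (Supp Fi)"
  define q where "q = measure Fo {..?a}"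
  have q: "0 < q"
    using assms(4) unfolding q_def .
  have a: "0 \<le> ?a"
    using mixed_strategy_Inf_Sup_Supp(1)[OF own_strategy] .
  have "AE y in Fo. ?a \<le> y"
    using mixed_strategy_Inf_Sup_Supp(4)[OF opp_strategy] by eventually_elim (use assms(1) in auto)
  then have "win ?a \<le> measure Fo {?a} / 2"
    using assms(2) by (intro win_tie_le) auto
  also have "\<dots> \<le> q / 2"
    unfolding q_def using opp(2) by (intro divide_right_mono opp.finite_measure_mono) auto
  finally have win_a: "win ?a \<le> q / 2" .
  define e where "e = min (vi * q / 4) (L - ?a)"
  have "0 < e"
    using q value_pos assms(2) unfolding e_def by simp
  moreover have "e \<le> vi * q / 4" "e \<le> L - ?a"
    unfolding e_def by (rule min.cobounded1, rule min.cobounded2)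
  ultimately have e: "0 < e" "e \<le> vi * q / 4" "?a + e \<le> Bi"
    using L_val_le(1)[of Bi Bo vi vo] by linarith+
  have "q \<le> measure Fo {..<?a + e}"
    unfolding q_def using opp(2) e(1) by (intro opp.finite_measure_mono) auto
  also have "\<dots> \<le> win (?a + e)"
    by (rule measure_lessThan_le_win)
  finally have "vi * q \<le> vi * win (?a + e)"
    using value_pos by simp
  moreover have "payoff (?a + e) \<le> eq_payoff"
    using payoff_le_eq_payoff a e by simp
  moreover have "vi * win ?a \<le> vi * q / 2"
    using mult_left_mono[OF win_a, of vi] value_pos by simp
  moreover have "0 < vi * q"
    using value_pos q by simp
  ultimately show False
    using payoff_Inf_Supp[OF assms(3)] e(2) unfolding payoff_eq by linarith
qed

end

lemma nash_eq_best_response: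
  assumes "0 \<le> B1" "0 \<le> B2" "0 < v1" "0 < v2" "nash_eq B1 v1 B2 v2 F1 F2"
  shows "best_response B1 v1 B2 v2 F1 F2" "best_response B2 v2 B1 v1 F2 F1"
  using assms unfolding nash_eq_def by (auto intro!: best_response.intro)

lemma Sup_Supp_not_less_L:
  assumes P1: "best_response B1 v1 B2 v2 F1 F2" and P2: "best_response B2 v2 B1 v1 F2 F1"
    and same_Sup: "Sup (Supp F1) = Sup (Supp F2)"
  shows "\<not> Sup (Supp F1) < L_val B1 B2 v1 v2"
proof
  let ?L = "L_val B1 B2 v1 v2"
  assume "Sup (Supp F1) < ?L"
  then have lt: "Sup (Supp F2) < ?L" "Sup (Supp F1) < L_val B2 B1 v2 v1"
    using same_Sup L_val_commute by auto
  have "Inf (Supp F2) = Inf (Supp F1)"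
    using best_response.opp_atom_below_Inf_Supp(2)[OF P1 lt(1)]
      best_response.opp_atom_below_Inf_Supp(2)[OF P2 lt(2)] by simp
  moreover have "Inf (Supp F1) < ?L"
    using mixed_strategy_Inf_Sup_Supp(2)[OF best_response.own_strategy[OF P1]] lt same_Sup by simp
  ultimately show False
    using best_response.no_common_lowest_atom[OF P1]
      best_response.opp_atom_below_Inf_Supp(1)[OF P1 lt(1)]
      best_response.opp_atom_below_Inf_Supp(1)[OF P2 lt(2)] by simp
qed

theorem lemma2:
  fixes B1 B2 v1 v2 :: real and F1 F2 :: "real measure"
  assumes "B1 \<ge> 0" and "B2 \<ge> 0" and "v1 > 0" and "v2 > 0"
    and "nash_eq B1 v1 B2 v2 F1 F2"
  shows "Sup (Supp F1) = L_val B1 B2 v1 v2 \<and> Sup (Supp F2) = L_val B1 B2 v1 v2"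
proof -
  note P1 = nash_eq_best_response(1)[OF assms] and P2 = nash_eq_best_response(2)[OF assms]
  have same_Sup: "Sup (Supp F1) = Sup (Supp F2)"
    using best_response.Sup_Supp_le_opp[OF P1] best_response.Sup_Supp_le_opp[OF P2]
    by (rule antisym)
  have "Sup (Supp F1) \<le> L_val B1 B2 v1 v2"
    using best_response.Sup_Supp_le_min[OF P1] best_response.Sup_Supp_le_min[OF P2] same_Sup
    unfolding L_val_def by simp
  with Sup_Supp_not_less_L[OF P1 P2 same_Sup] same_Sup show ?thesis
    by simp
qed

end
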